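(* Let $\alpha$ be a unit speed Frenet curve in $\mathbb{E}^3$ and $\beta$ an osculating mate of $\alpha$ with unit tangent $\bar T$. The following are equivalent: (i) the tangent indicatrix $\bar T$ of $\beta$ is a general helix; (ii) $\beta$ is a slant helix; (iii) $\alpha$ is a general helix.
   Context: $\alpha:I\to\mathbb{E}^3$ is parametrized by arclength $s$, with Frenet frame $\{T,N,B\}$, curvature $\kappa>0$, torsion $\tau$. An osculating mate of $\alpha$ is a curve $\beta(s)=\int(x_1T+x_2N)ds$ with smooth $x_1,x_2$, $x_1^2+x_2^2=1$ and $\beta''\perp\mathrm{span}\{T,N\}$; $\beta$ is assumed to be a Frenet curve, unit speed in $s$, with Frenet frame $\{\bar T,\bar N,\bar B\}$. The tangent indicatrix of $\beta$ is the spherical curve $s\mapsto\bar T(s)$. A general helix is a curve whose tangent makes a constant angle with a fixed direction (equivalently, the ratio torsion/curvature is constant). A slant helix is a curve whose principal normal makes a constant angle with a fixed direction (equivalently $\frac{k^2}{(k^2+t^2)^{3/2}}(t/k)'$ is constant, $k,t$ its curvature and torsion). *)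

theory Defs
  imports "HOL-Analysis.Analysis"
begin

fun vderiv :: "nat \<Rightarrow> (real \<Rightarrow> 'a::real_normed_vector) \<Rightarrow> real \<Rightarrow> 'a" where
  "vderiv 0 f = f"
| "vderiv (Suc n) f = (\<lambda>t. vector_derivative (vderiv n f) (at t))"

definition smooth_on :: "(real \<Rightarrow> 'a::real_normed_vector) \<Rightarrow> real set \<Rightarrow> bool" where
  "smooth_on f I \<longleftrightarrow>
     (\<forall>n. \<forall>t\<in>I. (vderiv n f has_vector_derivative vderiv (Suc n) f t) (at t))"

definition tangent :: "(real \<Rightarrow> real^3) \<Rightarrow> real \<Rightarrow> real^3" where
  "tangent \<gamma> s = vderiv 1 \<gamma> s"

definition curvature :: "(real \<Rightarrow> real^3) \<Rightarrow> real \<Rightarrow> real" where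
  "curvature \<gamma> s = norm (vderiv 2 \<gamma> s)"

definition normal :: "(real \<Rightarrow> real^3) \<Rightarrow> real \<Rightarrow> real^3" where
  "normal \<gamma> s = (1 / curvature \<gamma> s) *\<^sub>R vderiv 2 \<gamma> s"

definition unit_speed_frenet_curve :: "(real \<Rightarrow> real^3) \<Rightarrow> real set \<Rightarrow> bool" where
  "unit_speed_frenet_curve \<gamma> I \<longleftrightarrow>
     smooth_on \<gamma> I \<and> (\<forall>s\<in>I. norm (tangent \<gamma> s) = 1 \<and> curvature \<gamma> s > 0)"

definition osculating_mate :: "(real \<Rightarrow> real^3) \<Rightarrow> (real \<Rightarrow> real^3) \<Rightarrow> real set \<Rightarrow> bool" where
  "osculating_mate \<alpha> \<beta> I \<longleftrightarrow>
     (\<exists>x1 x2 :: real \<Rightarrow> real. smooth_on x1 I \<and> smooth_on x2 I \<and>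
        (\<forall>s\<in>I. (x1 s)\<^sup>2 + (x2 s)\<^sup>2 = 1 \<and>
           (\<beta> has_vector_derivative (x1 s *\<^sub>R tangent \<alpha> s + x2 s *\<^sub>R normal \<alpha> s)) (at s) \<and>
           inner (vderiv 2 \<beta> s) (tangent \<alpha> s) = 0 \<and>
           inner (vderiv 2 \<beta> s) (normal \<alpha> s) = 0))"

definition general_helix :: "(real \<Rightarrow> real^3) \<Rightarrow> real set \<Rightarrow> bool" where
  "general_helix \<gamma> I \<longleftrightarrow>
     (\<forall>s\<in>I. vderiv 1 \<gamma> s \<noteq> 0) \<and>
     (\<exists>u c. norm u = 1 \<and>
        (\<forall>s\<in>I. inner ((1 / norm (vderiv 1 \<gamma> s)) *\<^sub>R vderiv 1 \<gamma> s) u = c))"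

definition slant_helix :: "(real \<Rightarrow> real^3) \<Rightarrow> real set \<Rightarrow> bool" where
  "slant_helix \<gamma> I \<longleftrightarrow> (\<exists>u c. norm u = 1 \<and> (\<forall>s\<in>I. inner (normal \<gamma> s) u = c))"

end

theory Submission
  imports Defs
begin

text \<open>Write T, N for the tangent and principal normal of \<alpha> and Nb for the principal
  normal of \<beta>, so that \<beta>' = x1 T + x2 N. Since \<beta>'' is orthogonal to T and N, Nb is (up to
  sign) the binormal of \<alpha>, so its derivative is a multiple of N, namely -(Nb \<bullet> N') N, and the
  factor Nb \<bullet> N' (the torsion of \<alpha> up to sign) cannot vanish because the curvature of \<beta>
  equals x2 (Nb \<bullet> N') > 0. A unit field whose derivative is a nonvanishing multiple of N makes
  a constant angle with u exactly when u is orthogonal to N along the curve; applied to T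
  (with T' = \<kappa> N) and to Nb this shows that \<alpha> is a general helix and \<beta> is a slant helix
  under one and the same condition. Finally, the unit tangent of the tangent indicatrix of \<beta>
  is \<beta>''/|\<beta>''| = Nb, so (i) and (ii) say the same thing.\<close>

lemma smooth_onD:
  assumes "smooth_on f I" "t \<in> I"
  shows "(vderiv n f has_vector_derivative vderiv (Suc n) f t) (at t)"
  using assms unfolding smooth_on_def by blast

lemma inner_constant_deriv_zero:
  fixes f g :: "real \<Rightarrow> 'a::real_inner"
  assumes "open I" "s \<in> I"
    and "(f has_vector_derivative f') (at s)" "(g has_vector_derivative g') (at s)"
    and "\<And>t. t \<in> I \<Longrightarrow> inner (f t) (g t) = c"
  shows "inner (f s) g' + inner f' (g s) = 0"
proof -
  have "((\<lambda>t. inner (f t) (g t)) has_vector_derivative inner (f s) g' + inner f' (g s)) (at s)"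
    using bounded_bilinear.has_vector_derivative[OF bounded_bilinear_inner assms(3,4)] by simp
  moreover have "((\<lambda>t. inner (f t) (g t)) has_vector_derivative 0) (at s)"
    by (rule has_vector_derivative_transform_within_open[of "\<lambda>_. c" _ _ I]) (use assms in auto)
  ultimately show ?thesis
    using vector_derivative_unique_at by blast
qed

lemma constant_inner_iff_orthogonal_derivative:
  fixes \<nu> n :: "real \<Rightarrow> 'a::real_inner"
  assumes "open I" "convex I"
    and "\<And>s. s \<in> I \<Longrightarrow> \<mu> s \<noteq> 0"
    and "\<And>s. s \<in> I \<Longrightarrow> (\<nu> has_vector_derivative \<mu> s *\<^sub>R n s) (at s)"
  shows "(\<exists>c. \<forall>s\<in>I. inner (\<nu> s) u = c) \<longleftrightarrow> (\<forall>s\<in>I. inner (n s) u = 0)"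
proof
  assume "\<exists>c. \<forall>s\<in>I. inner (\<nu> s) u = c"
  then obtain c where "\<And>s. s \<in> I \<Longrightarrow> inner (\<nu> s) u = c" by blast
  then have "inner (\<mu> s *\<^sub>R n s) u = 0" if "s \<in> I" for s
    using inner_constant_deriv_zero[OF assms(1) that assms(4)[OF that], of "\<lambda>_. u" 0 c] by simp
  then show "\<forall>s\<in>I. inner (n s) u = 0"
    using assms(3) by simp
next
  assume orth: "\<forall>s\<in>I. inner (n s) u = 0"
  show "\<exists>c. \<forall>s\<in>I. inner (\<nu> s) u = c"
  proof (rule has_field_derivative_zero_constant[OF assms(2)])
    fix s assume "s \<in> I"
    have "((\<lambda>t. inner (\<nu> t) u) has_vector_derivative inner (\<mu> s *\<^sub>R n s) u) (at s)"
      using bounded_linear.has_vector_derivative[OF bounded_linear_inner_left assms(4)[OF \<open>s \<in> I\<close>]] .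
    then have "((\<lambda>t. inner (\<nu> t) u) has_vector_derivative 0) (at s)"
      using orth \<open>s \<in> I\<close> by simp
    then show "((\<lambda>t. inner (\<nu> t) u) has_real_derivative 0) (at s within I)"
      by (simp add: has_real_derivative_iff_has_vector_derivative has_vector_derivative_at_within)
  qed
qed

lemma orthonormal_triple_expand:
  fixes e1 e2 e3 v :: "real^3"
  assumes "norm e1 = 1" "norm e2 = 1" "norm e3 = 1"
    and "inner e1 e2 = 0" "inner e1 e3 = 0" "inner e2 e3 = 0"
  shows "v = inner v e1 *\<^sub>R e1 + inner v e2 *\<^sub>R e2 + inner v e3 *\<^sub>R e3"
proof -
  define B where "B = {e1, e2, e3}"
  have distinct: "e1 \<noteq> e2" "e1 \<noteq> e3" "e2 \<noteq> e3"
    using assms by (auto simp: norm_eq_1)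
  have orth: "pairwise orthogonal B"
    using assms by (auto simp: B_def pairwise_def orthogonal_def inner_commute)
  have "independent B"
    by (rule pairwise_orthogonal_independent[OF orth]) (use assms in \<open>auto simp: B_def\<close>)
  moreover have "card B = DIM(real^3)"
    using distinct by (simp add: B_def)
  ultimately have span: "v \<in> span B"
    using card_ge_dim_independent[of B UNIV] by auto
  have "(\<Sum>i\<in>B. inner v i *\<^sub>R i) = v"
    by (rule orthonormal_basis_expand[OF orth _ span]) (use assms in \<open>auto simp: B_def\<close>)
  then show ?thesis
    using distinct by (simp add: B_def add.assoc)
qed

lemma tangent_eq: "tangent \<gamma> = vderiv 1 \<gamma>"
  by (simp add: fun_eq_iff tangent_def)

lemma normal_eq: "normal \<gamma> = (\<lambda>s. (1 / norm (vderiv 2 \<gamma> s)) *\<^sub>R vderiv 2 \<gamma> s)"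
  by (simp add: fun_eq_iff normal_def curvature_def)

lemma general_helix_tangent_iff_slant_helix:
  assumes "\<And>s. s \<in> I \<Longrightarrow> curvature \<gamma> s > 0"
  shows "general_helix (tangent \<gamma>) I \<longleftrightarrow> slant_helix \<gamma> I"
proof -
  have "vderiv 1 (tangent \<gamma>) = vderiv 2 \<gamma>"
    by (simp add: tangent_eq numeral_2_eq_2)
  then show ?thesis
    using assms unfolding general_helix_def slant_helix_def normal_eq curvature_def by auto
qed

lemma unit_speed_frenet_curve_tangent_has_derivative:
  assumes "unit_speed_frenet_curve \<gamma> I" "s \<in> I"
  shows "(tangent \<gamma> has_vector_derivative curvature \<gamma> s *\<^sub>R normal \<gamma> s) (at s)"
proof -
  have "(vderiv 1 \<gamma> has_vector_derivative vderiv 2 \<gamma> s) (at s)"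
    using assms smooth_onD[of \<gamma> I s 1] by (simp add: unit_speed_frenet_curve_def numeral_2_eq_2)
  moreover have "curvature \<gamma> s *\<^sub>R normal \<gamma> s = vderiv 2 \<gamma> s"
    using assms by (force simp: unit_speed_frenet_curve_def normal_def)
  ultimately show ?thesis
    by (simp add: tangent_eq)
qed

lemma unit_speed_frenet_curve_normal_differentiable:
  assumes "unit_speed_frenet_curve \<gamma> I" "s \<in> I"
  shows "normal \<gamma> differentiable (at s)"
proof -
  have diff: "vderiv 2 \<gamma> differentiable (at s)"
    using assms smooth_onD[of \<gamma> I s 2] by (auto simp: unit_speed_frenet_curve_def differentiableI_vector)
  have nonzero: "vderiv 2 \<gamma> s \<noteq> 0"
    using assms by (auto simp: unit_speed_frenet_curve_def curvature_def)
  have "(\<lambda>t. norm (vderiv 2 \<gamma> t)) differentiable (at s)"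
    using differentiable_compose[OF differentiable_norm_at[OF nonzero] diff] .
  with diff nonzero show ?thesis
    unfolding normal_eq by (simp add: differentiable_scaleR)
qed

lemma unit_speed_frenet_curve_norm_normal:
  assumes "unit_speed_frenet_curve \<gamma> I" "s \<in> I"
  shows "norm (normal \<gamma> s) = 1"
  using assms by (simp add: unit_speed_frenet_curve_def normal_def curvature_def)

lemma unit_speed_frenet_curve_inner_tangent_normal:
  assumes "unit_speed_frenet_curve \<gamma> I" "open I" "s \<in> I"
  shows "inner (tangent \<gamma> s) (normal \<gamma> s) = 0"
proof -
  have T': "(tangent \<gamma> has_vector_derivative curvature \<gamma> s *\<^sub>R normal \<gamma> s) (at s)"
    using unit_speed_frenet_curve_tangent_has_derivative[OF assms(1,3)] .
  have "inner (tangent \<gamma> s) (curvature \<gamma> s *\<^sub>R normal \<gamma> s)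
      + inner (curvature \<gamma> s *\<^sub>R normal \<gamma> s) (tangent \<gamma> s) = 0"
    by (rule inner_constant_deriv_zero[OF assms(2,3) T' T', of 1])
      (use assms(1) in \<open>simp add: unit_speed_frenet_curve_def dot_square_norm\<close>)
  then show ?thesis
    using assms(1,3) by (force simp: unit_speed_frenet_curve_def inner_commute)
qed

lemma general_helix_iff_normal_orthogonal:
  assumes "unit_speed_frenet_curve \<gamma> I" "open I" "convex I"
  shows "general_helix \<gamma> I \<longleftrightarrow> (\<exists>u. norm u = 1 \<and> (\<forall>s\<in>I. inner (normal \<gamma> s) u = 0))"
proof -
  have "general_helix \<gamma> I \<longleftrightarrow> (\<exists>u. norm u = 1 \<and> (\<exists>c. \<forall>s\<in>I. inner (tangent \<gamma> s) u = c))"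
    using assms(1) unfolding general_helix_def unit_speed_frenet_curve_def tangent_eq by fastforce
  also have "\<dots> \<longleftrightarrow> (\<exists>u. norm u = 1 \<and> (\<forall>s\<in>I. inner (normal \<gamma> s) u = 0))"
  proof -
    have "(\<exists>c. \<forall>s\<in>I. inner (tangent \<gamma> s) u = c) \<longleftrightarrow> (\<forall>s\<in>I. inner (normal \<gamma> s) u = 0)" for u
      by (rule constant_inner_iff_orthogonal_derivative[OF assms(2,3) _
          unit_speed_frenet_curve_tangent_has_derivative[OF assms(1)]])
        (use assms(1) in \<open>auto simp: unit_speed_frenet_curve_def\<close>)
    then show ?thesis
      by simp
  qed
  finally show ?thesis .
qed

text \<open>The hypotheses of osculating_mate with x1 and x2 fixed.\<close>

locale osculating_mate_frame =
  fixes \<alpha> \<beta> :: "real \<Rightarrow> real^3" and I :: "real set" and x1 x2 :: "real \<Rightarrow> real"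
  assumes open_I: "open I" and convex_I: "convex I"
    and frenet_\<alpha>: "unit_speed_frenet_curve \<alpha> I"
    and frenet_\<beta>: "unit_speed_frenet_curve \<beta> I"
    and differentiable_x1: "\<And>s. s \<in> I \<Longrightarrow> x1 differentiable (at s)"
    and differentiable_x2: "\<And>s. s \<in> I \<Longrightarrow> x2 differentiable (at s)"
    and has_derivative_\<beta>:
      "\<And>s. s \<in> I \<Longrightarrow> (\<beta> has_vector_derivative x1 s *\<^sub>R tangent \<alpha> s + x2 s *\<^sub>R normal \<alpha> s) (at s)"
    and inner_second_deriv_tangent: "\<And>s. s \<in> I \<Longrightarrow> inner (vderiv 2 \<beta> s) (tangent \<alpha> s) = 0"
    and inner_second_deriv_normal: "\<And>s. s \<in> I \<Longrightarrow> inner (vderiv 2 \<beta> s) (normal \<alpha> s) = 0"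
begin

lemma tangent_mate:
  assumes "s \<in> I"
  shows "tangent \<beta> s = x1 s *\<^sub>R tangent \<alpha> s + x2 s *\<^sub>R normal \<alpha> s"
proof -
  have "(\<beta> has_vector_derivative tangent \<beta> s) (at s)"
    using frenet_\<beta> assms smooth_onD[of \<beta> I s 0] by (simp add: unit_speed_frenet_curve_def tangent_def)
  with has_derivative_\<beta>[OF assms] show ?thesis
    using vector_derivative_unique_at by blast
qed

lemma inner_normal_mate_tangent: "s \<in> I \<Longrightarrow> inner (normal \<beta> s) (tangent \<alpha> s) = 0"
  and inner_normal_mate_normal: "s \<in> I \<Longrightarrow> inner (normal \<beta> s) (normal \<alpha> s) = 0"
  using inner_second_deriv_tangent inner_second_deriv_normal by (fastforce simp: normal_def)+

lemma curvature_mate: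
  assumes "s \<in> I"
  shows "curvature \<beta> s = x2 s * inner (normal \<beta> s) (vector_derivative (normal \<alpha>) (at s))"
proof -
  define N' where "N' = vector_derivative (normal \<alpha>) (at s)"
  let ?D = "(x1 s *\<^sub>R (curvature \<alpha> s *\<^sub>R normal \<alpha> s) + deriv x1 s *\<^sub>R tangent \<alpha> s)
      + (x2 s *\<^sub>R N' + deriv x2 s *\<^sub>R normal \<alpha> s)"
  have "((\<lambda>t. x1 t *\<^sub>R tangent \<alpha> t + x2 t *\<^sub>R normal \<alpha> t) has_vector_derivative ?D) (at s)"
    using assms differentiable_x1 differentiable_x2
      unit_speed_frenet_curve_tangent_has_derivative[OF frenet_\<alpha>]
      unit_speed_frenet_curve_normal_differentiable[OF frenet_\<alpha>]
    by (intro has_vector_derivative_add has_vector_derivative_scaleR)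
      (auto simp: N'_def DERIV_deriv_iff_real_differentiable vector_derivative_works[symmetric])
  then have "(tangent \<beta> has_vector_derivative ?D) (at s)"
    by (rule has_vector_derivative_transform_within_open[OF _ open_I assms]) (simp add: tangent_mate)
  with unit_speed_frenet_curve_tangent_has_derivative[OF frenet_\<beta> assms]
  have "curvature \<beta> s *\<^sub>R normal \<beta> s = ?D"
    using vector_derivative_unique_at by blast
  then have "inner (normal \<beta> s) (curvature \<beta> s *\<^sub>R normal \<beta> s) = x2 s * inner (normal \<beta> s) N'"
    using assms inner_normal_mate_tangent inner_normal_mate_normal by (simp add: inner_add_right)
  then show ?thesis
    using unit_speed_frenet_curve_norm_normal[OF frenet_\<beta> assms] by (simp add: N'_def dot_square_norm)
qed

lemma normal_mate_has_derivative:
  assumes "s \<in> I"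
  shows "(normal \<beta> has_vector_derivative
      - inner (normal \<beta> s) (vector_derivative (normal \<alpha>) (at s)) *\<^sub>R normal \<alpha> s) (at s)"
proof -
  let ?T = "tangent \<alpha>" and ?N = "normal \<alpha>" and ?Nb = "normal \<beta>"
  define N' where "N' = vector_derivative ?N (at s)"
  define Nb' where "Nb' = vector_derivative ?Nb (at s)"
  have dT: "(?T has_vector_derivative curvature \<alpha> s *\<^sub>R ?N s) (at s)"
    using unit_speed_frenet_curve_tangent_has_derivative[OF frenet_\<alpha> assms] .
  have dN: "(?N has_vector_derivative N') (at s)"
    using unit_speed_frenet_curve_normal_differentiable[OF frenet_\<alpha> assms]
    by (simp add: N'_def vector_derivative_works)
  have dNb: "(?Nb has_vector_derivative Nb') (at s)"
    using unit_speed_frenet_curve_normal_differentiable[OF frenet_\<beta> assms]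
    by (simp add: Nb'_def vector_derivative_works)
  have "inner (?Nb s) (curvature \<alpha> s *\<^sub>R ?N s) + inner Nb' (?T s) = 0"
    using inner_constant_deriv_zero[OF open_I assms dNb dT] inner_normal_mate_tangent by blast
  then have Nb'_T: "inner Nb' (?T s) = 0"
    using inner_normal_mate_normal[OF assms] by simp
  have Nb'_N: "inner Nb' (?N s) = - inner (?Nb s) N'"
    using inner_constant_deriv_zero[OF open_I assms dNb dN] inner_normal_mate_normal by fastforce
  have "inner (?Nb s) Nb' + inner Nb' (?Nb s) = 0"
    using inner_constant_deriv_zero[OF open_I assms dNb dNb, of 1] unit_speed_frenet_curve_norm_normal[OF frenet_\<beta>]
    by (simp add: dot_square_norm)
  then have Nb'_Nb: "inner Nb' (?Nb s) = 0"
    by (simp add: inner_commute)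
  have "norm (?T s) = 1" "norm (?N s) = 1" "norm (?Nb s) = 1"
    using frenet_\<alpha> frenet_\<beta> assms
    by (auto simp: unit_speed_frenet_curve_def unit_speed_frenet_curve_norm_normal)
  moreover have "inner (?T s) (?N s) = 0" "inner (?T s) (?Nb s) = 0" "inner (?N s) (?Nb s) = 0"
    using unit_speed_frenet_curve_inner_tangent_normal[OF frenet_\<alpha> open_I assms]
      inner_normal_mate_tangent[OF assms] inner_normal_mate_normal[OF assms]
    by (simp_all add: inner_commute)
  ultimately have "Nb' = inner Nb' (?T s) *\<^sub>R ?T s + inner Nb' (?N s) *\<^sub>R ?N s + inner Nb' (?Nb s) *\<^sub>R ?Nb s"
    by (rule orthonormal_triple_expand)
  with Nb'_T Nb'_N Nb'_Nb have "Nb' = - inner (?Nb s) N' *\<^sub>R ?N s"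
    by simp
  with dNb show ?thesis
    by (simp add: N'_def)
qed

lemma slant_helix_iff_normal_orthogonal:
  "slant_helix \<beta> I \<longleftrightarrow> (\<exists>u. norm u = 1 \<and> (\<forall>s\<in>I. inner (normal \<alpha> s) u = 0))"
proof -
  have "(\<exists>c. \<forall>s\<in>I. inner (normal \<beta> s) u = c) \<longleftrightarrow> (\<forall>s\<in>I. inner (normal \<alpha> s) u = 0)" for u
    by (rule constant_inner_iff_orthogonal_derivative[OF open_I convex_I _ normal_mate_has_derivative])
      (use curvature_mate frenet_\<beta> in \<open>force simp: unit_speed_frenet_curve_def\<close>)
  then show ?thesis
    unfolding slant_helix_def by simp
qed

end

theorem theorem14:
  fixes \<alpha> \<beta> :: "real \<Rightarrow> real^3" and I :: "real set"
  assumes "open I" and "is_interval I" and "I \<noteq> {}"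
    and "unit_speed_frenet_curve \<alpha> I"
    and "osculating_mate \<alpha> \<beta> I"
    and "unit_speed_frenet_curve \<beta> I"
  shows "(general_helix (tangent \<beta>) I \<longleftrightarrow> slant_helix \<beta> I)
       \<and> (slant_helix \<beta> I \<longleftrightarrow> general_helix \<alpha> I)"
proof -
  have "convex I"
    using \<open>is_interval I\<close> by (rule is_interval_convex)
  obtain x1 x2 where "smooth_on x1 I" "smooth_on x2 I"
    and "\<And>s. s \<in> I \<Longrightarrow>
      (\<beta> has_vector_derivative x1 s *\<^sub>R tangent \<alpha> s + x2 s *\<^sub>R normal \<alpha> s) (at s) \<and>
      inner (vderiv 2 \<beta> s) (tangent \<alpha> s) = 0 \<and> inner (vderiv 2 \<beta> s) (normal \<alpha> s) = 0"
    using \<open>osculating_mate \<alpha> \<beta> I\<close> unfolding osculating_mate_def by blast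
  then interpret osculating_mate_frame \<alpha> \<beta> I x1 x2
    using assms \<open>convex I\<close> smooth_onD[of _ I _ 0]
    by unfold_locales (auto intro: differentiableI_vector)
  have "general_helix (tangent \<beta>) I \<longleftrightarrow> slant_helix \<beta> I"
    using frenet_\<beta> by (intro general_helix_tangent_iff_slant_helix) (simp add: unit_speed_frenet_curve_def)
  moreover have "general_helix \<alpha> I \<longleftrightarrow> (\<exists>u. norm u = 1 \<and> (\<forall>s\<in>I. inner (normal \<alpha> s) u = 0))"
    using frenet_\<alpha> open_I convex_I by (rule general_helix_iff_normal_orthogonal)
  ultimately show ?thesis
    using slant_helix_iff_normal_orthogonal by blast
qed

end
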